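(* Let $a<b$ and let $f:[a,b]\to\mathbb{R}$ be continuous. For $a\le u<x\le b$ write $I_f(u,x)=\frac{1}{x-u}\int_u^x f(t)\,\mathrm{d}t$. If $$\bigl[f(a)-I_f(a,b)\bigr]\cdot\bigl[f(b)-I_f(a,b)\bigr]\geq 0,$$ then there exists $\eta\in(a,b]$ such that $f(\eta)=I_f(a,\eta)$.
   Context: $I_f(u,x)$ denotes the integral mean of $f$ over $[u,x]$. *)

theory Defs
  imports "HOL-Analysis.Analysis"
begin

definition integral_mean :: "(real \<Rightarrow> real) \<Rightarrow> real \<Rightarrow> real \<Rightarrow> real" where
  "integral_mean f u x = integral {u..x} f / (x - u)"

end

theory Submission
  imports Defs
begin

text \<open>The function \<open>x \<mapsto> I\<^sub>f(a,x)\<close>, extended continuously to \<open>x = a\<close> by \<open>f a\<close>, has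
  derivative \<open>(f x - I\<^sub>f(a,x)) / (x - a)\<close> on \<open>(a,b]\<close>. Suppose \<open>I\<^sub>f(a,b) \<le> f a\<close> and \<open>I\<^sub>f(a,b) < f b\<close>
  (the other case follows by passing to \<open>-f\<close>). Then the derivative at \<open>b\<close> is positive
  and the value at \<open>a\<close> is at least the value at \<open>b\<close>, so the minimum on \<open>[a,b]\<close> is attained
  in the interior, where the derivative vanishes, i.e. \<open>f \<eta> = I\<^sub>f(a,\<eta>)\<close>.\<close>

lemma interior_critical_point_of_pos_deriv_right_end:
  fixes h h' :: "real \<Rightarrow> real"
  assumes "a < b" and cont: "continuous_on {a..b} h" and "h b \<le> h a"
    and der_b: "(h has_real_derivative l) (at b within {a..b})" and "0 < l"
    and der: "\<And>x. x \<in> {a<..<b} \<Longrightarrow> (h has_real_derivative h' x) (at x)"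
  shows "\<exists>c\<in>{a<..<b}. h' c = 0"
proof -
  obtain d where "d > 0" and inc_left: "\<And>e. 0 < e \<Longrightarrow> b - e \<in> {a..b} \<Longrightarrow> e < d \<Longrightarrow> h (b - e) < h b"
    using has_real_derivative_pos_inc_left[OF der_b \<open>0 < l\<close>] by blast
  define e where "e = min (b - a) (d / 2)"
  have "h (b - e) < h b"
    using \<open>a < b\<close> \<open>d > 0\<close> by (intro inc_left) (auto simp: e_def)
  moreover obtain c where "c \<in> {a..b}" and c_min: "\<And>z. z \<in> {a..b} \<Longrightarrow> h c \<le> h z"
    using continuous_attains_inf[OF compact_Icc _ cont] \<open>a < b\<close> by auto
  moreover have "b - e \<in> {a..b}"
    using \<open>a < b\<close> \<open>d > 0\<close> by (auto simp: e_def)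
  ultimately have "h c < h b" and "h c < h a"
    using \<open>h b \<le> h a\<close> by (meson c_min le_less_trans less_le_trans)+
  then have c: "c \<in> {a<..<b}"
    using \<open>c \<in> {a..b}\<close> by (cases "c = a"; cases "c = b") auto
  have "h' c = 0"
  proof (rule DERIV_local_min[OF der[OF c]])
    show "0 < min (c - a) (b - c)" using c by simp
    show "\<forall>z. \<bar>c - z\<bar> < min (c - a) (b - c) \<longrightarrow> h c \<le> h z"
      by (auto simp: abs_less_iff intro!: c_min)
  qed
  with c show ?thesis by blast
qed

lemma has_real_derivative_integral_mean:
  fixes f :: "real \<Rightarrow> real"
  assumes "continuous_on {a..b} f" and x: "x \<in> {a<..b}"
  shows "(integral_mean f a has_real_derivative (f x - integral_mean f a x) / (x - a))
           (at x within {a..b})"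
proof -
  have "(integral_mean f a has_real_derivative
          (f x * (x - a) - integral {a..x} f * 1) / ((x - a) * (x - a))) (at x within {a..b})"
    unfolding integral_mean_def [abs_def] using x
    by (intro DERIV_divide integral_has_real_derivative[OF assms(1)] derivative_eq_intros) auto
  moreover have "(f x * (x - a) - integral {a..x} f * 1) / ((x - a) * (x - a))
                   = (f x - integral_mean f a x) / (x - a)"
    using x by (simp add: integral_mean_def field_simps)
  ultimately show ?thesis by simp
qed

definition integral_mean_from :: "(real \<Rightarrow> real) \<Rightarrow> real \<Rightarrow> real \<Rightarrow> real" where
  "integral_mean_from f a x = (if x = a then f a else integral_mean f a x)"

lemma has_real_derivative_integral_mean_from:
  fixes f :: "real \<Rightarrow> real"
  assumes "continuous_on {a..b} f" and x: "x \<in> {a<..b}"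
  shows "(integral_mean_from f a has_real_derivative (f x - integral_mean f a x) / (x - a))
           (at x within {a..b})"
  using has_real_derivative_integral_mean[OF assms]
  by (rule has_field_derivative_transform_within[where d = "x - a"])
     (use x in \<open>auto simp: integral_mean_from_def dist_real_def\<close>)

lemma continuous_on_integral_mean_from:
  fixes f :: "real \<Rightarrow> real"
  assumes "a < b" and cont: "continuous_on {a..b} f"
  shows "continuous_on {a..b} (integral_mean_from f a)"
  unfolding continuous_on_eq_continuous_within
proof
  fix x assume x: "x \<in> {a..b}"
  show "continuous (at x within {a..b}) (integral_mean_from f a)"
  proof (cases "x = a")
    case True
    have "((\<lambda>y. (integral {a..y} f - integral {a..a} f) / (y - a)) \<longlongrightarrow> f a) (at a within {a..b})"
      using integral_has_real_derivative[OF cont, of a] \<open>a < b\<close>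
      by (simp add: has_field_derivative_iff)
    then have "(integral_mean f a \<longlongrightarrow> f a) (at a within {a..b})"
      by (simp add: integral_mean_def [abs_def])
    then have "(integral_mean_from f a \<longlongrightarrow> f a) (at a within {a..b})"
      by (rule Lim_transform_within[OF _ zero_less_one]) (auto simp: integral_mean_from_def)
    with True show ?thesis
      by (simp add: continuous_within integral_mean_from_def)
  next
    case False
    with x have "x \<in> {a<..b}" by simp
    then show ?thesis
      by (rule DERIV_continuous[OF has_real_derivative_integral_mean_from[OF cont]])
  qed
qed

lemma integral_mean_eq_point_if_end_above:
  fixes f :: "real \<Rightarrow> real"
  assumes "a < b" and cont: "continuous_on {a..b} f"
    and "integral_mean f a b \<le> f a" and "integral_mean f a b < f b"
  shows "\<exists>\<eta>\<in>{a<..<b}. f \<eta> = integral_mean f a \<eta>"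
proof -
  let ?h = "integral_mean_from f a" and ?h' = "\<lambda>x. (f x - integral_mean f a x) / (x - a)"
  have "\<exists>c\<in>{a<..<b}. ?h' c = 0"
  proof (rule interior_critical_point_of_pos_deriv_right_end[OF \<open>a < b\<close>])
    show "continuous_on {a..b} ?h"
      using continuous_on_integral_mean_from[OF assms(1,2)] .
    show "?h b \<le> ?h a"
      using assms by (simp add: integral_mean_from_def)
    show "(?h has_real_derivative ?h' b) (at b within {a..b})"
      using has_real_derivative_integral_mean_from[OF cont] \<open>a < b\<close> by simp
    show "0 < ?h' b"
      using assms by simp
    show "(?h has_real_derivative ?h' x) (at x)" if x: "x \<in> {a<..<b}" for x
    proof -
      have "(?h has_real_derivative ?h' x) (at x within {a<..<b})"
        using x by (intro has_field_derivative_subset[OF has_real_derivative_integral_mean_from[OF cont]]) auto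
      then show ?thesis
        by (simp add: at_within_open[OF x open_greaterThanLessThan])
    qed
  qed
  then show ?thesis by auto
qed

lemma integral_mean_uminus:
  "integral_mean (\<lambda>t. - f t) a x = - integral_mean f a x"
  by (simp add: integral_mean_def)

theorem mainTheorem6:
  fixes f :: "real \<Rightarrow> real" and a b :: real
  assumes "a < b"
    and "continuous_on {a..b} f"
    and "(f a - integral_mean f a b) * (f b - integral_mean f a b) \<ge> 0"
  shows "\<exists>\<eta>\<in>{a<..b}. f \<eta> = integral_mean f a \<eta>"
proof -
  let ?M = "integral_mean f a b"
  consider "f b = ?M" | "?M < f b" "?M \<le> f a" | "f b < ?M" "f a \<le> ?M"
    using assms(3) by (smt (verit) mult_less_0_iff)
  then show ?thesis
  proof cases
    case 1
    with \<open>a < b\<close> show ?thesis by auto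
  next
    case 2
    with integral_mean_eq_point_if_end_above[OF assms(1,2)] show ?thesis by auto
  next
    case 3
    have "continuous_on {a..b} (\<lambda>t. - f t)"
      using assms(2) by (intro continuous_intros)
    from integral_mean_eq_point_if_end_above[OF assms(1) this] 3 show ?thesis
      by (auto simp: integral_mean_uminus)
  qed
qed

end
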